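(* Let $K_1\subset\mathbb{R}^n$, $K_2\subset\wedge^2\mathbb{R}^n,\ldots,K_n\subset\wedge^n\mathbb{R}^n$ be proper cones. Then for every $j=2,\ldots,n$, $$\widetilde{T}(K_1,\ldots,K_j)\subseteq\operatorname{int}(T(K_1,\ldots,K_j)).$$
   Context: A proper cone is a closed convex cone that is pointed and solid; $\wedge^j\mathbb{R}^n$ is the $j$th exterior power of $\mathbb{R}^n$. Define recursively $T(K_1)=K_1\cup(-K_1)$, and for $j\ge2$, $T(K_1,\ldots,K_j)$ is the closure of the set of all $x_1\in\mathbb{R}^n$ for which there exist $x_2\in T(K_1),\ldots,x_j\in T(K_1,\ldots,K_{j-1})$ with $x_1\wedge\cdots\wedge x_j\in\operatorname{int}(K_j)\cup\operatorname{int}(-K_j)$. Similarly $\widetilde{T}(K_1)=\operatorname{int}(K_1)\cup(-\operatorname{int}(K_1))$, and for $j\ge2$, $\widetilde{T}(K_1,\ldots,K_j)$ is the set (no closure) of all $x_1\in\mathbb{R}^n$ for which there exist $x_2\in\widetilde{T}(K_1),\ldots,x_j\in\widetilde{T}(K_1,\ldots,K_{j-1})$ with $x_1\wedge\cdots\wedge x_j\in\operatorname{int}(K_j)\cup\operatorname{int}(-K_j)$. *)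

theory Defs
  imports "HOL-Analysis.Analysis"
begin

text \<open>R^n is modelled as real^'n (CARD('n) = n). The exterior power of degree j is
  modelled inside real^('n set) as the linear subspace of vectors supported on the
  j-element subsets of the index type (standard basis e_S, S = {s_1 < ... < s_j}).\<close>

definition ext_space :: "nat \<Rightarrow> (real^('n::finite set)) set" where
  "ext_space j = {w. \<forall>S. card S \<noteq> j \<longrightarrow> w $ S = 0}"

text \<open>Coordinates of x_1 wedge ... wedge x_j: the j x j minors (Leibniz formula).\<close>
definition wedge :: "(real^('n::{finite,linorder})) list \<Rightarrow> real^('n::{finite,linorder} set)" where
  "wedge xs = (\<chi> S. if card S = length xs then
      (\<Sum>p | p permutes {..<length xs}.
         of_int (sign p) * (\<Prod>i<length xs. (xs ! i) $ (sorted_list_of_set S ! p i)))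
    else 0)"

definition ext_int :: "nat \<Rightarrow> (real^('n::finite set)) set \<Rightarrow> (real^('n set)) set" where
  "ext_int j A = (top_of_set (ext_space j)) interior_of A"

definition proper_cone_in :: "'a::euclidean_space set \<Rightarrow> 'a set \<Rightarrow> bool" where
  "proper_cone_in V K \<longleftrightarrow> K \<subseteq> V \<and> closed K \<and> convex K \<and> cone K \<and>
     K \<inter> uminus ` K = {0} \<and> (top_of_set V) interior_of K \<noteq> {}"

text \<open>Levels T(K_1), T(K_1,K_2), ...: T_levels K1 K m is the list of the first m levels;
  level j (1-based) is at position j-1.\<close>
definition T_step :: "(real^('n::{finite,linorder})) set \<Rightarrow> (nat \<Rightarrow> (real^('n::{finite,linorder} set)) set)
    \<Rightarrow> (real^('n::{finite,linorder})) set list \<Rightarrow> (real^('n::{finite,linorder})) set" where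
  "T_step K1 K L = (if L = [] then K1 \<union> uminus ` K1 else
     closure {x. \<exists>xs. length xs = length L \<and> (\<forall>k<length L. xs ! k \<in> L ! k) \<and>
        wedge (x # xs) \<in> ext_int (Suc (length L)) (K (Suc (length L)))
                          \<union> ext_int (Suc (length L)) (uminus ` K (Suc (length L)))})"

primrec T_levels :: "(real^('n::{finite,linorder})) set \<Rightarrow> (nat \<Rightarrow> (real^('n::{finite,linorder} set)) set)
    \<Rightarrow> nat \<Rightarrow> (real^('n::{finite,linorder})) set list" where
  "T_levels K1 K 0 = []"
| "T_levels K1 K (Suc m) = T_levels K1 K m @ [T_step K1 K (T_levels K1 K m)]"

definition Tset :: "(real^('n::{finite,linorder})) set \<Rightarrow> (nat \<Rightarrow> (real^('n::{finite,linorder} set)) set)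
    \<Rightarrow> nat \<Rightarrow> (real^('n::{finite,linorder})) set" where
  "Tset K1 K j = T_levels K1 K j ! (j - 1)"

definition Tt_step :: "(real^('n::{finite,linorder})) set \<Rightarrow> (nat \<Rightarrow> (real^('n::{finite,linorder} set)) set)
    \<Rightarrow> (real^('n::{finite,linorder})) set list \<Rightarrow> (real^('n::{finite,linorder})) set" where
  "Tt_step K1 K L = (if L = [] then interior K1 \<union> uminus ` interior K1 else
     {x. \<exists>xs. length xs = length L \<and> (\<forall>k<length L. xs ! k \<in> L ! k) \<and>
        wedge (x # xs) \<in> ext_int (Suc (length L)) (K (Suc (length L)))
                          \<union> ext_int (Suc (length L)) (uminus ` K (Suc (length L)))})"

primrec Tt_levels :: "(real^('n::{finite,linorder})) set \<Rightarrow> (nat \<Rightarrow> (real^('n::{finite,linorder} set)) set)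
    \<Rightarrow> nat \<Rightarrow> (real^('n::{finite,linorder})) set list" where
  "Tt_levels K1 K 0 = []"
| "Tt_levels K1 K (Suc m) = Tt_levels K1 K m @ [Tt_step K1 K (Tt_levels K1 K m)]"

definition Ttset :: "(real^('n::{finite,linorder})) set \<Rightarrow> (nat \<Rightarrow> (real^('n::{finite,linorder} set)) set)
    \<Rightarrow> nat \<Rightarrow> (real^('n::{finite,linorder})) set" where
  "Ttset K1 K j = Tt_levels K1 K j ! (j - 1)"

end

theory Submission
  imports Defs
begin

text \<open>For fixed x_2, ..., x_j the map x \<mapsto> x \<wedge> x_2 \<wedge> ... \<wedge> x_j is continuous into the
  exterior power, so the set of admissible x_1 is open before the closure is taken; hence
  every level of the tilde-construction lies in the interior of the corresponding level of
  the closed construction.\<close>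

lemma length_T_levels [simp]: "length (T_levels K1 K m) = m"
  by (induction m) auto

lemma length_Tt_levels [simp]: "length (Tt_levels K1 K m) = m"
  by (induction m) auto

lemma T_levels_eq_Nil_iff [simp]: "T_levels K1 K m = [] \<longleftrightarrow> m = 0"
  by (metis length_T_levels length_0_conv)

lemma Tset_Suc: "Tset K1 K (Suc m) = T_step K1 K (T_levels K1 K m)"
  by (simp add: Tset_def nth_append)

lemma Ttset_Suc: "Ttset K1 K (Suc m) = Tt_step K1 K (Tt_levels K1 K m)"
  by (simp add: Ttset_def nth_append)

lemma nth_T_levels: "k < m \<Longrightarrow> T_levels K1 K m ! k = Tset K1 K (Suc k)"
proof (induction m)
  case (Suc m)
  then show ?case
    by (cases "k < m") (auto simp: nth_append Tset_Suc less_Suc_eq)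
qed simp

lemma nth_Tt_levels: "k < m \<Longrightarrow> Tt_levels K1 K m ! k = Ttset K1 K (Suc k)"
proof (induction m)
  case (Suc m)
  then show ?case
    by (cases "k < m") (auto simp: nth_append Ttset_Suc less_Suc_eq)
qed simp

lemma wedge_in_ext_space: "wedge xs \<in> ext_space (length xs)"
  by (auto simp: wedge_def ext_space_def)

lemma continuous_on_wedge_Cons:
  fixes xs :: "(real^('n::{finite,linorder})) list"
  shows "continuous_on UNIV (\<lambda>y. wedge (y # xs))"
proof -
  have entry: "continuous_on UNIV (\<lambda>y::real^'n::{finite,linorder}. ((y # xs) ! i) $ c)" for i c
    by (cases i) (auto intro!: continuous_intros)
  show ?thesis
    unfolding wedge_def
    by (intro continuous_on_vec_lambda, rename_tac S, case_tac "card S = Suc (length xs)")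
       (auto intro!: continuous_intros entry)
qed

lemma open_wedge_Cons_preimage:
  fixes xs :: "(real^('n::{finite,linorder})) list"
  assumes "openin (top_of_set (ext_space (Suc (length xs)))) E"
  shows "open {y. wedge (y # xs) \<in> E}"
proof -
  have "(\<lambda>y. wedge (y # xs)) \<in> UNIV \<rightarrow> ext_space (Suc (length xs))"
    using wedge_in_ext_space[of "_ # xs"] by auto
  then have "openin (top_of_set UNIV) (UNIV \<inter> (\<lambda>y. wedge (y # xs)) -` E)"
    using continuous_on_open_gen continuous_on_wedge_Cons assms by blast
  then show ?thesis
    by (simp add: vimage_def)
qed

lemma Tt_step_subset_interior_T_step:
  assumes "L \<noteq> []" "length L' = length L" "\<forall>k<length L. L' ! k \<subseteq> L ! k"
  shows "Tt_step K1 K L' \<subseteq> interior (T_step K1 K L)"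
proof
  fix x assume "x \<in> Tt_step K1 K L'"
  define j where "j = Suc (length L)"
  define E where "E = ext_int j (K j) \<union> ext_int j (uminus ` K j)"
  obtain xs where xs: "length xs = length L" "\<forall>k<length L. xs ! k \<in> L' ! k"
      "wedge (x # xs) \<in> E"
  proof -
    have "L' \<noteq> []"
      using assms(1,2) by auto
    then show thesis
      using that \<open>x \<in> Tt_step K1 K L'\<close> unfolding Tt_step_def E_def j_def assms(2) by auto
  qed
  have "openin (top_of_set (ext_space j)) E"
    unfolding E_def ext_int_def by (intro openin_Un openin_interior_of)
  then have "open {y. wedge (y # xs) \<in> E}"
    using open_wedge_Cons_preimage xs(1) j_def by metis
  moreover have "{y. wedge (y # xs) \<in> E} \<subseteq> T_step K1 K L"
  proof
    fix y assume "y \<in> {y. wedge (y # xs) \<in> E}"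
    then have "\<exists>xs. length xs = length L \<and> (\<forall>k<length L. xs ! k \<in> L ! k) \<and> wedge (y # xs) \<in> E"
      using assms(3) xs(1,2) by blast
    then show "y \<in> T_step K1 K L"
      using assms(1) closure_subset unfolding T_step_def E_def j_def by fastforce
  qed
  ultimately show "x \<in> interior (T_step K1 K L)"
    using xs(3) interior_maximal by blast
qed

lemma Ttset_subset_Tset: "Ttset K1 K (Suc m) \<subseteq> Tset K1 K (Suc m)"
proof (induction m rule: less_induct)
  case (less m)
  show ?case
  proof (cases "m = 0")
    case True
    then show ?thesis
      using interior_subset[of K1] by (auto simp: Tset_Suc Ttset_Suc T_step_def Tt_step_def)
  next
    case False
    have "\<forall>k<m. Tt_levels K1 K m ! k \<subseteq> T_levels K1 K m ! k"
      using less.IH by (simp add: nth_T_levels nth_Tt_levels)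
    then have "Tt_step K1 K (Tt_levels K1 K m) \<subseteq> interior (T_step K1 K (T_levels K1 K m))"
      using False by (intro Tt_step_subset_interior_T_step) auto
    then show ?thesis
      using interior_subset by (metis Tset_Suc Ttset_Suc order_trans)
  qed
qed

theorem theorem7:
  fixes K1 :: "(real^('n::{finite,linorder})) set"
    and K :: "nat \<Rightarrow> (real^('n set)) set"
  assumes "proper_cone_in UNIV K1"
    and "\<forall>j\<in>{2..CARD('n)}. proper_cone_in (ext_space j) (K j)"
  shows "\<forall>j\<in>{2..CARD('n)}. Ttset K1 K j \<subseteq> interior (Tset K1 K j)"
proof
  fix j assume "j \<in> {2..CARD('n)}"
  then obtain m where j: "j = Suc m" and "m \<noteq> 0"
    by (cases j) auto
  have "\<forall>k<m. Tt_levels K1 K m ! k \<subseteq> T_levels K1 K m ! k"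
    by (simp add: nth_T_levels nth_Tt_levels Ttset_subset_Tset)
  then show "Ttset K1 K j \<subseteq> interior (Tset K1 K j)"
    using \<open>m \<noteq> 0\<close> Tt_step_subset_interior_T_step[of "T_levels K1 K m" "Tt_levels K1 K m" K1 K]
    by (simp add: j Tset_Suc Ttset_Suc)
qed

end
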